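(* For $n\ge 4$, the wheel $W_n$ satisfies $\nu^*(W_n)=\frac{13n^2+n}{2}$.
   Context: For a finite simple graph $G=(V,E)$ with $\ell=|V|+|E|$, a construction sequence (c-sequence) is a bijection $x:\{1,\dots,\ell\}\to V\sqcup E$ such that every edge $e=uw$ satisfies $x^{-1}(e)>\max\{x^{-1}(u),x^{-1}(w)\}$. The cost of $x$ is $\nu(x)=\sum_{e=uw\in E}\big(2x^{-1}(e)-x^{-1}(u)-x^{-1}(w)\big)$, and $\nu^*(G)$ is the maximum of $\nu(x)$ over all c-sequences for $G$. The wheel $W_n=C_n*K_1$ is the $(n+1)$-vertex graph obtained from the cycle $C_n$ by adding a hub vertex adjacent to all $n$ cycle vertices. *)

theory Defs
  imports Complex_Main
begin

definition simple_graph :: "'a set \<Rightarrow> 'a set set \<Rightarrow> bool" where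
  "simple_graph V E \<longleftrightarrow> finite V \<and>
     (\<forall>e\<in>E. \<exists>u w. u \<in> V \<and> w \<in> V \<and> u \<noteq> w \<and> e = {u, w})"

definition elems :: "'a set \<Rightarrow> 'a set set \<Rightarrow> ('a + 'a set) set" where
  "elems V E = Inl ` V \<union> Inr ` E"

definition glen :: "'a set \<Rightarrow> 'a set set \<Rightarrow> nat" where
  "glen V E = card V + card E"

definition pos :: "'a set \<Rightarrow> 'a set set \<Rightarrow> (nat \<Rightarrow> 'a + 'a set) \<Rightarrow> ('a + 'a set) \<Rightarrow> nat" where
  "pos V E x a = inv_into {1..glen V E} x a"

definition is_cseq :: "'a set \<Rightarrow> 'a set set \<Rightarrow> (nat \<Rightarrow> 'a + 'a set) \<Rightarrow> bool" where
  "is_cseq V E x \<longleftrightarrow> bij_betw x {1..glen V E} (elems V E) \<and>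
     (\<forall>e\<in>E. \<forall>u\<in>e. pos V E x (Inr e) > pos V E x (Inl u))"

definition cost :: "'a set \<Rightarrow> 'a set set \<Rightarrow> (nat \<Rightarrow> 'a + 'a set) \<Rightarrow> int" where
  "cost V E x = (\<Sum>e\<in>E. 2 * int (pos V E x (Inr e)) - (\<Sum>u\<in>e. int (pos V E x (Inl u))))"

definition nu_star :: "'a set \<Rightarrow> 'a set set \<Rightarrow> int" where
  "nu_star V E = Max {cost V E x | x. is_cseq V E x}"

text \<open>Wheel W_n: cycle vertices 0..n-1, hub n.\<close>
definition wheel_V :: "nat \<Rightarrow> nat set" where
  "wheel_V n = {0..n}"

definition wheel_E :: "nat \<Rightarrow> nat set set" where
  "wheel_E n = {{i, (i + 1) mod n} | i. i < n} \<union> {{i, n} | i. i < n}"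

end

(* Since the positions of a bijection fill {1..L} with L = |V| + |E|, the edge positions add up
   to L(L+1)/2 minus the vertex positions, so the cost of any bijection is
   L(L+1) - sum_v (deg v + 2) * x^-1(v).  In W_n we have L = 3n+1, weight 5 on the rim and n+2 on
   the hub, so the cost is (3n+1)(3n+2) - 5 S - (n-3) h, where S is the sum of the n+1 distinct
   positive vertex positions and h the position of the hub.  Then S >= (n+1)(n+2)/2 and h >= 1
   bound twice the cost by 13n^2+n, and the order hub, rim vertices, edges is a c-sequence
   attaining the bound.  Costs of c-sequences are nonnegative, so the maximum nu* is taken over
   a finite set. *)

theory Submission
  imports Defs
begin

lemma card_mult_Suc_card_le_twice_sum:
  fixes S :: "nat set"
  assumes "finite S" and "0 \<notin> S"
  shows "card S * (card S + 1) \<le> 2 * \<Sum>S"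
  using assms
proof (induction "card S" arbitrary: S)
  case 0
  then show ?case by simp
next
  case (Suc k S)
  define m where "m = Max S"
  have "S \<noteq> {}" using Suc.hyps(2) by auto
  then have "m \<in> S" using Suc.prems(1) m_def by simp
  have "S \<subseteq> {1..m}"
  proof
    fix y assume "y \<in> S"
    have "0 < y" using \<open>y \<in> S\<close> Suc.prems(2) by (metis gr0I)
    moreover have "y \<le> m" using \<open>y \<in> S\<close> Suc.prems(1) m_def by simp
    ultimately show "y \<in> {1..m}" by simp
  qed
  then have "card S \<le> m" using card_mono[of "{1..m}" S] by simp
  have "card (S - {m}) = k" using Suc.hyps(2) \<open>m \<in> S\<close> by simp
  then have "k * (k + 1) \<le> 2 * \<Sum>(S - {m})"
    using Suc.hyps(1)[of "S - {m}"] Suc.prems by simp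
  moreover have "\<Sum>S = m + \<Sum>(S - {m})"
    using Suc.prems(1) \<open>m \<in> S\<close> by (simp add: sum.remove)
  ultimately show ?case using \<open>card S \<le> m\<close> Suc.hyps(2)[symmetric] by simp
qed

lemma simple_graph_finite_edges:
  assumes "simple_graph V E"
  shows "finite E"
proof -
  have "E \<subseteq> Pow V" and "finite V" using assms unfolding simple_graph_def by auto
  then show "finite E" by (meson finite_Pow_iff finite_subset)
qed

lemma simple_graph_edge_subset:
  assumes "simple_graph V E" and "e \<in> E"
  shows "e \<subseteq> V"
proof -
  obtain u w where "u \<in> V" "w \<in> V" "e = {u, w}"
    using assms unfolding simple_graph_def by blast
  then show ?thesis by simp
qed

lemma bij_betw_pos:
  "bij_betw x {1..glen V E} (elems V E) \<Longrightarrow> bij_betw (pos V E x) (elems V E) {1..glen V E}"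
  unfolding pos_def by (rule bij_betw_inv_into)

lemma pos_mem_range:
  "bij_betw x {1..glen V E} (elems V E) \<Longrightarrow> a \<in> elems V E \<Longrightarrow> pos V E x a \<in> {1..glen V E}"
  using bij_betw_apply[OF bij_betw_pos] .

lemma pos_eqI:
  assumes "bij_betw x {1..glen V E} (elems V E)" and "k \<in> {1..glen V E}" and "x k = a"
  shows "pos V E x a = k"
  using assms unfolding pos_def by (metis bij_betw_imp_inj_on inv_into_f_f)

lemma sum_pos_vertices_edges:
  assumes "finite V" and "finite E" and "bij_betw x {1..glen V E} (elems V E)"
  shows "2 * ((\<Sum>v\<in>V. int (pos V E x (Inl v))) + (\<Sum>e\<in>E. int (pos V E x (Inr e))))
           = int (glen V E) * (int (glen V E) + 1)"
proof -
  let ?p = "\<lambda>a. int (pos V E x a)"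
  have "(\<Sum>v\<in>V. ?p (Inl v)) + (\<Sum>e\<in>E. ?p (Inr e)) = (\<Sum>a\<in>Inl ` V. ?p a) + (\<Sum>a\<in>Inr ` E. ?p a)"
    by (simp add: sum.reindex)
  also have "\<dots> = (\<Sum>a\<in>elems V E. ?p a)"
    unfolding elems_def using assms(1,2) by (intro sum.union_disjoint[symmetric]) auto
  also have "\<dots> = (\<Sum>k\<in>{1..glen V E}. int k)"
    using sum.reindex_bij_betw[OF bij_betw_pos[OF assms(3)], of int] .
  finally show ?thesis
    using double_gauss_sum_from_Suc_0[of "glen V E", where 'a=int] by simp
qed

lemma cost_eq_vertex_sums:
  assumes "finite V" and "finite E" and "bij_betw x {1..glen V E} (elems V E)"
  shows "cost V E x = int (glen V E) * (int (glen V E) + 1)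
           - 2 * (\<Sum>v\<in>V. int (pos V E x (Inl v)))
           - (\<Sum>e\<in>E. \<Sum>u\<in>e. int (pos V E x (Inl u)))"
  using sum_pos_vertices_edges[OF assms]
  unfolding cost_def by (simp add: sum_subtractf sum_distrib_left[symmetric])

lemma twice_sum_pos_vertices_ge:
  assumes "finite V" and "bij_betw x {1..glen V E} (elems V E)"
  shows "int (card V) * (int (card V) + 1) \<le> 2 * (\<Sum>v\<in>V. int (pos V E x (Inl v)))"
proof -
  let ?q = "\<lambda>v. pos V E x (Inl v)"
  have "inj_on (pos V E x) (Inl ` V)"
    using bij_betw_pos[OF assms(2)] unfolding bij_betw_def elems_def by (meson inj_on_subset Un_upper1)
  then have inj: "inj_on ?q V"
    by (auto simp: inj_on_def)
  have "0 \<notin> ?q ` V"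
    using pos_mem_range[OF assms(2)] by (force simp: elems_def)
  then have "card (?q ` V) * (card (?q ` V) + 1) \<le> 2 * \<Sum>(?q ` V)"
    using assms(1) by (intro card_mult_Suc_card_le_twice_sum) auto
  then have "card V * (card V + 1) \<le> 2 * (\<Sum>v\<in>V. ?q v)"
    by (simp add: card_image[OF inj] sum.reindex[OF inj])
  then have "int (card V * (card V + 1)) \<le> int (2 * (\<Sum>v\<in>V. ?q v))"
    by (simp only: of_nat_le_iff)
  then show ?thesis by (simp add: algebra_simps)
qed

lemma cost_nonneg:
  assumes "simple_graph V E" and "is_cseq V E x"
  shows "0 \<le> cost V E x"
  unfolding cost_def
proof (rule sum_nonneg)
  fix e assume "e \<in> E"
  then obtain u w where e: "e = {u, w}" "u \<noteq> w"
    using assms(1) unfolding simple_graph_def by blast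
  have "pos V E x (Inl u) < pos V E x (Inr e)" "pos V E x (Inl w) < pos V E x (Inr e)"
    using assms(2) \<open>e \<in> E\<close> e unfolding is_cseq_def by blast+
  then show "0 \<le> 2 * int (pos V E x (Inr e)) - (\<Sum>u\<in>e. int (pos V E x (Inl u)))"
    using e(2) unfolding e(1) by simp
qed

lemma nu_star_eqI:
  assumes "simple_graph V E" and "is_cseq V E x\<^sub>0"
    and "\<And>x. is_cseq V E x \<Longrightarrow> cost V E x \<le> cost V E x\<^sub>0"
  shows "nu_star V E = cost V E x\<^sub>0"
proof -
  let ?C = "{cost V E x | x. is_cseq V E x}"
  have "?C \<subseteq> {0..cost V E x\<^sub>0}"
    using assms cost_nonneg by fastforce
  then have "finite ?C" by (rule finite_subset) simp
  then show ?thesis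
    unfolding nu_star_def using assms(2,3) by (intro Max_eqI) auto
qed

lemma vertices_first_cseq:
  assumes "simple_graph V E" and p: "bij_betw p V {1..card V}"
  shows "\<exists>x. is_cseq V E x \<and> (\<forall>v\<in>V. pos V E x (Inl v) = p v)"
proof -
  let ?L = "glen V E" and ?N = "card V"
  have "finite E" using assms(1) by (rule simple_graph_finite_edges)
  have "card {?N + 1..?L} = card E" unfolding glen_def by simp
  then obtain g where g: "bij_betw g {?N + 1..?L} E"
    using \<open>finite E\<close> finite_same_card_bij by (metis finite_atLeastAtMost)
  define x where "x k = (if k \<le> ?N then Inl (inv_into V p k) else Inr (g k))" for k
  have "bij_betw (Inl \<circ> inv_into V p) {1..?N} (Inl ` V)"
    using bij_betw_inv_into[OF p] by (rule bij_betw_trans) (simp add: bij_betw_def)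
  then have xV: "bij_betw x {1..?N} (Inl ` V)"
    by (rule bij_betw_cong[THEN iffD1, rotated]) (simp add: x_def)
  have "bij_betw (Inr \<circ> g) {?N + 1..?L} (Inr ` E)"
    using g by (rule bij_betw_trans) (simp add: bij_betw_def)
  then have xE: "bij_betw x {?N + 1..?L} (Inr ` E)"
    by (rule bij_betw_cong[THEN iffD1, rotated]) (simp add: x_def)
  have "{1..?L} = {1..?N} \<union> {?N + 1..?L}" unfolding glen_def by auto
  then have bij: "bij_betw x {1..?L} (elems V E)"
    unfolding elems_def using bij_betw_combine[OF xV xE] by auto
  have posV: "pos V E x (Inl v) = p v" if "v \<in> V" for v
  proof (rule pos_eqI[OF bij])
    have "p v \<in> {1..?N}" using p that by (rule bij_betw_apply)
    then show "p v \<in> {1..?L}" unfolding glen_def by simp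
    show "x (p v) = Inl v"
      using \<open>p v \<in> {1..?N}\<close> inv_into_f_f[OF bij_betw_imp_inj_on[OF p] that] by (simp add: x_def)
  qed
  have posE: "?N < pos V E x (Inr e)" if "e \<in> E" for e
  proof -
    obtain k where k: "k \<in> {?N + 1..?L}" "e = g k"
      using g \<open>e \<in> E\<close> by (metis bij_betw_imp_surj_on imageE)
    then have "pos V E x (Inr e) = k"
      by (intro pos_eqI[OF bij]) (simp_all add: x_def glen_def)
    then show ?thesis using k by simp
  qed
  have "is_cseq V E x"
    unfolding is_cseq_def
  proof (intro conjI ballI bij)
    fix e u assume "e \<in> E" "u \<in> e"
    then have "u \<in> V" using simple_graph_edge_subset[OF assms(1)] by blast
    then have "pos V E x (Inl u) \<le> ?N" using posV p by (auto dest: bij_betw_apply)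
    then show "pos V E x (Inl u) < pos V E x (Inr e)" using posE[OF \<open>e \<in> E\<close>] by simp
  qed
  then show ?thesis using posV by blast
qed

lemma Suc_mod_if_less:
  assumes "i < n"
  shows "Suc i mod n = (if Suc i < n then Suc i else 0)"
proof (cases "Suc i < n")
  case False
  then have "Suc i = n" using assms by simp
  then show ?thesis by simp
qed simp

lemma Suc_mod_neq_self: "1 < n \<Longrightarrow> i < n \<Longrightarrow> i \<noteq> Suc i mod n"
  by (simp add: Suc_mod_if_less)

lemma wheel_E_eq_images:
  "wheel_E n = (\<lambda>i. {i, Suc i mod n}) ` {..<n} \<union> (\<lambda>i. {i, n}) ` {..<n}"
  unfolding wheel_E_def by auto

lemma inj_on_rim_edge:
  assumes "3 \<le> n"
  shows "inj_on (\<lambda>i. {i, Suc i mod n}) {..<n}"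
proof (rule inj_onI)
  fix i j assume "i \<in> {..<n}" "j \<in> {..<n}" "{i, Suc i mod n} = {j, Suc j mod n}"
  then show "i = j"
    using assms unfolding doubleton_eq_iff by (auto simp: Suc_mod_if_less split: if_splits)
qed

lemma inj_on_spoke: "inj_on (\<lambda>i. {i, n}) {..<n}"
  by (rule inj_onI) (auto simp: doubleton_eq_iff)

lemma rim_edges_disjoint_spokes:
  "(\<lambda>i. {i, Suc i mod n}) ` {..<n} \<inter> (\<lambda>i. {i, n}) ` {..<n} = {}"
  by (auto simp: doubleton_eq_iff Suc_mod_if_less split: if_splits)

lemma card_wheel_E:
  assumes "3 \<le> n"
  shows "card (wheel_E n) = 2 * n"
  unfolding wheel_E_eq_images
  by (subst card_Un_disjoint)
     (simp_all add: rim_edges_disjoint_spokes card_image[OF inj_on_rim_edge[OF assms]] card_image[OF inj_on_spoke])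

lemma card_wheel_V: "card (wheel_V n) = n + 1"
  unfolding wheel_V_def by simp

lemma glen_wheel:
  "3 \<le> n \<Longrightarrow> glen (wheel_V n) (wheel_E n) = 3 * n + 1"
  unfolding glen_def wheel_V_def by (simp add: card_wheel_E)

lemma simple_graph_wheel:
  assumes "2 \<le> n"
  shows "simple_graph (wheel_V n) (wheel_E n)"
  unfolding simple_graph_def
proof (intro conjI ballI)
  show "finite (wheel_V n)" unfolding wheel_V_def by simp
  fix e assume "e \<in> wheel_E n"
  then consider i where "i < n" "e = {i, Suc i mod n}" | i where "i < n" "e = {i, n}"
    unfolding wheel_E_eq_images by blast
  then show "\<exists>u w. u \<in> wheel_V n \<and> w \<in> wheel_V n \<and> u \<noteq> w \<and> e = {u, w}"
  proof cases
    case (1 i)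
    have "i \<noteq> Suc i mod n" using assms \<open>i < n\<close> by (simp add: Suc_mod_neq_self)
    moreover have "Suc i mod n \<le> n" using \<open>i < n\<close> by (simp add: less_imp_le)
    ultimately show ?thesis
      using 1 unfolding wheel_V_def by (intro exI[of _ i] exI[of _ "Suc i mod n"]) simp
  next
    case (2 i)
    then show ?thesis unfolding wheel_V_def by (intro exI[of _ i] exI[of _ n]) simp
  qed
qed

lemma sum_wheel_V: "(\<Sum>v\<in>wheel_V n. f v) = (\<Sum>i<n. f i) + f n"
  unfolding wheel_V_def by (simp add: atLeast0AtMost lessThan_Suc_atMost[symmetric])

lemma sum_rotate_mod:
  fixes f :: "nat \<Rightarrow> 'a::comm_monoid_add"
  assumes "0 < n"
  shows "(\<Sum>i<n. f (Suc i mod n)) = (\<Sum>i<n. f i)"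
proof -
  have inj: "inj_on (\<lambda>i. Suc i mod n) {..<n}"
    by (rule inj_onI) (auto simp: Suc_mod_if_less split: if_splits)
  moreover have "(\<lambda>i. Suc i mod n) ` {..<n} = {..<n}"
    using assms by (intro endo_inj_surj[OF _ _ inj]) auto
  ultimately have "bij_betw (\<lambda>i. Suc i mod n) {..<n} {..<n}"
    unfolding bij_betw_def by blast
  then show ?thesis by (rule sum.reindex_bij_betw)
qed

lemma sum_wheel_edge_endpoints:
  fixes f :: "nat \<Rightarrow> 'a::comm_ring_1"
  assumes "3 \<le> n"
  shows "(\<Sum>e\<in>wheel_E n. \<Sum>u\<in>e. f u) = 3 * (\<Sum>i<n. f i) + of_nat n * f n"
proof -
  let ?R = "(\<lambda>i. {i, Suc i mod n}) ` {..<n}" and ?S = "(\<lambda>i. {i, n}) ` {..<n}"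
  have "(\<Sum>e\<in>?R. \<Sum>u\<in>e. f u) = (\<Sum>i<n. \<Sum>u\<in>{i, Suc i mod n}. f u)"
    by (rule sum.reindex[OF inj_on_rim_edge[OF assms], unfolded comp_def])
  also have "\<dots> = (\<Sum>i<n. f i + f (Suc i mod n))"
    using assms by (intro sum.cong) (simp_all add: Suc_mod_neq_self)
  also have "\<dots> = (\<Sum>i<n. f i) + (\<Sum>i<n. f i)"
    using assms by (simp only: sum.distrib sum_rotate_mod)
  finally have rim: "(\<Sum>e\<in>?R. \<Sum>u\<in>e. f u) = (\<Sum>i<n. f i) + (\<Sum>i<n. f i)" .
  have "(\<Sum>e\<in>?S. \<Sum>u\<in>e. f u) = (\<Sum>i<n. \<Sum>u\<in>{i, n}. f u)"
    by (rule sum.reindex[OF inj_on_spoke, unfolded comp_def])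
  also have "\<dots> = (\<Sum>i<n. f i) + of_nat n * f n"
    by (simp add: sum.distrib)
  finally have spokes: "(\<Sum>e\<in>?S. \<Sum>u\<in>e. f u) = (\<Sum>i<n. f i) + of_nat n * f n" .
  have "(\<Sum>e\<in>wheel_E n. \<Sum>u\<in>e. f u) = (\<Sum>e\<in>?R. \<Sum>u\<in>e. f u) + (\<Sum>e\<in>?S. \<Sum>u\<in>e. f u)"
    unfolding wheel_E_eq_images
    by (rule sum.union_disjoint) (simp_all add: rim_edges_disjoint_spokes)
  then show ?thesis unfolding rim spokes by (simp add: algebra_simps)
qed

lemma cost_wheel_eq:
  assumes "3 \<le> n" and bij: "bij_betw x {1..glen (wheel_V n) (wheel_E n)} (elems (wheel_V n) (wheel_E n))"
  shows "cost (wheel_V n) (wheel_E n) x = (3 * int n + 1) * (3 * int n + 2)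
           - 5 * (\<Sum>v\<in>wheel_V n. int (pos (wheel_V n) (wheel_E n) x (Inl v)))
           - (int n - 3) * int (pos (wheel_V n) (wheel_E n) x (Inl n))"
proof -
  let ?q = "\<lambda>v. int (pos (wheel_V n) (wheel_E n) x (Inl v))"
  have "finite (wheel_V n)" "finite (wheel_E n)"
    unfolding wheel_V_def wheel_E_eq_images by simp_all
  then have "cost (wheel_V n) (wheel_E n) x = (3 * int n + 1) * (3 * int n + 2)
      - 2 * (\<Sum>v\<in>wheel_V n. ?q v) - (3 * (\<Sum>i<n. ?q i) + int n * ?q n)"
    using cost_eq_vertex_sums[OF _ _ bij] sum_wheel_edge_endpoints[OF assms(1), of ?q]
    by (simp add: glen_wheel[OF assms(1)] algebra_simps)
  then show ?thesis by (simp add: sum_wheel_V algebra_simps)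
qed

lemma cost_wheel_le:
  assumes "3 \<le> n" and bij: "bij_betw x {1..glen (wheel_V n) (wheel_E n)} (elems (wheel_V n) (wheel_E n))"
  shows "2 * cost (wheel_V n) (wheel_E n) x \<le> 13 * int n ^ 2 + int n"
proof -
  let ?q = "\<lambda>v. int (pos (wheel_V n) (wheel_E n) x (Inl v))"
  have "(int n + 1) * (int n + 2) \<le> 2 * (\<Sum>v\<in>wheel_V n. ?q v)"
    using twice_sum_pos_vertices_ge[OF _ bij]
    by (simp add: card_wheel_V wheel_V_def add_ac)
  moreover have "1 \<le> ?q n"
    using pos_mem_range[OF bij, of "Inl n"] by (simp add: elems_def wheel_V_def)
  then have "int n - 3 \<le> (int n - 3) * ?q n"
    using assms(1) mult_left_mono[of 1 "?q n" "int n - 3"] by simp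
  ultimately show ?thesis
    unfolding cost_wheel_eq[OF assms] by (simp add: algebra_simps power2_eq_square)
qed

lemma twice_sum_lessThan_add_2: "2 * (\<Sum>i<n. int (i + 2)) = int n * int n + 3 * int n"
  by (induction n) (auto simp: algebra_simps)

lemma wheel_hub_first_cseq:
  assumes "3 \<le> n"
  obtains x where "is_cseq (wheel_V n) (wheel_E n) x"
    and "2 * cost (wheel_V n) (wheel_E n) x = 13 * int n ^ 2 + int n"
proof -
  define p where "p v = (if v = n then 1 else v + 2)" for v
  have "inj_on p (wheel_V n)" by (rule inj_onI) (auto simp: p_def split: if_splits)
  moreover have "p ` wheel_V n \<subseteq> {1..card (wheel_V n)}"
    by (auto simp: p_def card_wheel_V wheel_V_def)
  ultimately have "bij_betw p (wheel_V n) {1..card (wheel_V n)}"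
    unfolding bij_betw_def by (simp add: card_image card_subset_eq card_wheel_V)
  moreover have "simple_graph (wheel_V n) (wheel_E n)"
    using assms by (intro simple_graph_wheel) simp
  ultimately obtain x where x: "is_cseq (wheel_V n) (wheel_E n) x"
    and pos_x: "\<forall>v\<in>wheel_V n. pos (wheel_V n) (wheel_E n) x (Inl v) = p v"
    using vertices_first_cseq by blast
  have bij: "bij_betw x {1..glen (wheel_V n) (wheel_E n)} (elems (wheel_V n) (wheel_E n))"
    using x unfolding is_cseq_def by blast
  have hub: "pos (wheel_V n) (wheel_E n) x (Inl n) = 1"
    using pos_x by (simp add: wheel_V_def p_def)
  have "(\<Sum>v\<in>wheel_V n. int (pos (wheel_V n) (wheel_E n) x (Inl v)))
      = (\<Sum>i<n. int (pos (wheel_V n) (wheel_E n) x (Inl i))) + 1"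
    by (simp add: sum_wheel_V hub)
  also have "\<dots> = (\<Sum>i<n. int (i + 2)) + 1"
    using pos_x by (simp add: wheel_V_def p_def)
  finally have "2 * cost (wheel_V n) (wheel_E n) x = 13 * int n ^ 2 + int n"
    unfolding cost_wheel_eq[OF assms bij] hub using twice_sum_lessThan_add_2[of n]
    by (simp add: algebra_simps power2_eq_square)
  with x show thesis by (rule that)
qed

theorem theorem7:
  fixes n :: nat
  assumes "n \<ge> 4"
  shows "real_of_int (nu_star (wheel_V n) (wheel_E n)) = (13 * real n ^ 2 + real n) / 2"
proof -
  have n: "3 \<le> n" using assms by simp
  obtain x\<^sub>0 where x\<^sub>0: "is_cseq (wheel_V n) (wheel_E n) x\<^sub>0"
    and cost_x\<^sub>0: "2 * cost (wheel_V n) (wheel_E n) x\<^sub>0 = 13 * int n ^ 2 + int n"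
    using wheel_hub_first_cseq[OF n] .
  have "nu_star (wheel_V n) (wheel_E n) = cost (wheel_V n) (wheel_E n) x\<^sub>0"
  proof (rule nu_star_eqI[OF simple_graph_wheel x\<^sub>0])
    show "2 \<le> n" using assms by simp
    show "cost (wheel_V n) (wheel_E n) x \<le> cost (wheel_V n) (wheel_E n) x\<^sub>0"
      if "is_cseq (wheel_V n) (wheel_E n) x" for x
      using cost_wheel_le[OF n] that cost_x\<^sub>0 unfolding is_cseq_def by fastforce
  qed
  then have "2 * real_of_int (nu_star (wheel_V n) (wheel_E n)) = 13 * real n ^ 2 + real n"
    using arg_cong[OF cost_x\<^sub>0, of real_of_int] by simp
  then show ?thesis by simp
qed

end
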